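(* Let $a,b,c$ be positive numbers with $a<b<c$, $\lfloor c/b\rfloor\ge2$, $b-a<c_0<a$ and $0\le c_1\le2a-b$, where $c_0=c-\lfloor c/b\rfloor b$ and $c_1=c-c_0-\lfloor(c-c_0)/a\rfloor a$. Suppose $\mathcal S_{a,b,c}\ne\emptyset$ and either $a/b\notin\mathbb Q$, or $a/b=p/q$ and $c\in(b/q)\mathbb Z$ for some coprime positive integers $p,q$. Then for every $t\in\mathcal S_{a,b,c}$, $$Y_{a,b,c}(R_{a,b,c}(t))-Y_{a,b,c}(t)-Y_{a,b,c}(c_1+b-a)\in Y_{a,b,c}(a)\mathbb Z.$$
   Context: For $a,b,c>0$ and $t\in\mathbb R$, $\mathbf M_{a,b,c}(t)=(\chi_{[0,c)}(t-\mu+\lambda))_{\mu\in a\mathbb Z,\lambda\in b\mathbb Z}$ is the infinite matrix with rows indexed by $a\mathbb Z$ and columns by $b\mathbb Z$, acting by $(\mathbf M_{a,b,c}(t)\mathbf x)(\mu)=\sum_{\lambda\in b\mathbb Z}\chi_{[0,c)}(t-\mu+\lambda)\mathbf x(\lambda)$. $\mathcal B_b^0$ is the set of vectors $(\mathbf x(\lambda))_{\lambda\in b\mathbb Z}$ with entries in $\{0,1\}$ and $\mathbf x(0)=1$. $\mathbf 1$ denotes the vector indexed by $a\mathbb Z$ with all entries $1$. $\mathcal S_{a,b,c}=\{t:\mathbf M_{a,b,c}(t)\mathbf x=\mathbf 1\text{ for some }\mathbf x\in\mathcal B_b^0\}$. $R_{a,b,c}(t)=t+\lfloor c/b\rfloor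 b+b$ if $t\in[0,c_0+a-b)+a\mathbb Z$, $R_{a,b,c}(t)=t$ if $t\in[c_0+a-b,c_0)+a\mathbb Z$, $R_{a,b,c}(t)=t+\lfloor c/b\rfloor b$ if $t\in[c_0,a)+a\mathbb Z$. The holes-removal map is $Y_{a,b,c}(t)=\operatorname{sgn}(t)\,|[\min(0,t),\max(0,t))\cap\mathcal S_{a,b,c}|$ with $|\cdot|$ Lebesgue measure. $A+a\mathbb Z=\{x+ak:x\in A,k\in\mathbb Z\}$. *)

theory Defs
  imports "HOL-Analysis.Analysis"
begin

definition chi0 :: "real \<Rightarrow> real \<Rightarrow> real" where
  "chi0 c s = (if 0 \<le> s \<and> s < c then 1 else 0)"

text \<open>Entry of M_{a,b,c}(t) in row mu = m*a and column lambda = k*b (m,k integers).\<close>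
definition Mentry :: "real \<Rightarrow> real \<Rightarrow> real \<Rightarrow> real \<Rightarrow> int \<Rightarrow> int \<Rightarrow> real" where
  "Mentry a b c t m k = chi0 c (t - of_int m * a + of_int k * b)"

text \<open>(M x)(mu) for mu = m*a; only finitely many entries of a row are nonzero.\<close>
definition Mapply :: "real \<Rightarrow> real \<Rightarrow> real \<Rightarrow> real \<Rightarrow> (int \<Rightarrow> real) \<Rightarrow> int \<Rightarrow> real" where
  "Mapply a b c t x m = (\<Sum>k\<in>{k. Mentry a b c t m k \<noteq> 0}. Mentry a b c t m k * x k)"

text \<open>B_b^0: 0/1 vectors indexed by bZ (k <-> k*b) with x(0) = 1.\<close>
definition Bb0 :: "(int \<Rightarrow> real) set" where
  "Bb0 = {x. (\<forall>k. x k \<in> {0, 1}) \<and> x 0 = 1}"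

definition Sabc :: "real \<Rightarrow> real \<Rightarrow> real \<Rightarrow> real set" where
  "Sabc a b c = {t. \<exists>x\<in>Bb0. \<forall>m. Mapply a b c t x m = 1}"

definition c0 :: "real \<Rightarrow> real \<Rightarrow> real \<Rightarrow> real" where
  "c0 a b c = c - of_int \<lfloor>c / b\<rfloor> * b"

definition c1 :: "real \<Rightarrow> real \<Rightarrow> real \<Rightarrow> real" where
  "c1 a b c = c - c0 a b c - of_int \<lfloor>(c - c0 a b c) / a\<rfloor> * a"

definition in_per :: "real \<Rightarrow> real \<Rightarrow> real \<Rightarrow> real \<Rightarrow> bool" where
  "in_per a l u t = (\<exists>k::int. l \<le> t - of_int k * a \<and> t - of_int k * a < u)"

definition Rabc :: "real \<Rightarrow> real \<Rightarrow> real \<Rightarrow> real \<Rightarrow> real" where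
  "Rabc a b c t =
     (if in_per a 0 (c0 a b c + a - b) t then t + of_int \<lfloor>c / b\<rfloor> * b + b
      else if in_per a (c0 a b c + a - b) (c0 a b c) t then t
      else if in_per a (c0 a b c) a t then t + of_int \<lfloor>c / b\<rfloor> * b
      else undefined)"

definition Yabc :: "real \<Rightarrow> real \<Rightarrow> real \<Rightarrow> real \<Rightarrow> real" where
  "Yabc a b c t = sgn t * measure lebesgue ({min 0 t..<max 0 t} \<inter> Sabc a b c)"

end

theory Submission
  imports Defs
begin

text \<open>
  A vector \<open>x \<in> B\<^sub>b\<^sup>0\<close> with \<open>M(t)x = 1\<close> is the indicator of a set \<open>\<Lambda> \<ni> 0\<close> of integers
  such that every row window \<open>t - ma + \<Lambda>b\<close> meets \<open>[0, c)\<close> exactly once. When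
  \<open>b - a < c\<^sub>0 < a\<close>, the successor of \<open>0\<close> in \<open>\<Lambda>\<close> is \<open>L + 1\<close> or \<open>L\<close> (with \<open>L = \<lfloor>c/b\<rfloor>\<close>)
  according as the residue of \<open>t\<close> modulo \<open>a\<close> lies in \<open>[0, c\<^sub>0 + a - b)\<close> or in \<open>[c\<^sub>0, a)\<close>,
  and residues in between never occur. So \<open>\<Lambda>\<close> is the orbit of \<open>0\<close> under an explicit
  dynamics, which makes \<open>S\<close> Borel; \<open>S\<close> is \<open>a\<close>-periodic; translation by \<open>(L + 1)b\<close>, resp.
  \<open>Lb\<close>, maps \<open>S\<close> onto \<open>S\<close> on each residue interval of the first, resp. second, kind; and
  \<open>S\<close> misses \<open>[c\<^sub>1, c\<^sub>1 + b - a)\<close>. Hence for \<open>t \<in> S\<close> the increment \<open>Y(R t) - Y(t)\<close> is the mass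
  of \<open>S\<close> on a period-aligned interval of length \<open>(L + 1)b\<close> or \<open>Lb\<close>, i.e. \<open>Y((L + 1)b)\<close> or
  \<open>Y(Lb)\<close>; writing \<open>Lb = c\<^sub>1 + Na\<close>, periodicity and the hole turn these into
  \<open>Y(c\<^sub>1 + b - a) + (N + 1) Y(a)\<close> and \<open>Y(c\<^sub>1 + b - a) + N Y(a)\<close>.
\<close>

section \<open>Exact covers\<close>

text \<open>\<open>\<Lambda>\<close> is the support of \<open>x \<in> B\<^sub>b\<^sup>0\<close> (index \<open>k\<close> standing for \<open>kb\<close>); row \<open>m\<close> of
  \<open>M(t)x = 1\<close> says that exactly one \<open>k \<in> \<Lambda>\<close> lies in the window of row \<open>ma\<close>.\<close>

definition in_window :: "real \<Rightarrow> real \<Rightarrow> real \<Rightarrow> real \<Rightarrow> int \<Rightarrow> int \<Rightarrow> bool" where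
  "in_window a b c t m k \<longleftrightarrow> t - of_int m * a + of_int k * b \<in> {0..<c}"

definition exact_cover :: "real \<Rightarrow> real \<Rightarrow> real \<Rightarrow> real \<Rightarrow> int set \<Rightarrow> bool" where
  "exact_cover a b c t \<Lambda> \<longleftrightarrow> (\<forall>m. \<exists>!k. k \<in> \<Lambda> \<and> in_window a b c t m k)"

lemma finite_in_window:
  assumes "0 < b"
  shows "finite {k. in_window a b c t m k}"
proof (rule finite_subset)
  show "{k. in_window a b c t m k} \<subseteq> {\<lceil>(of_int m * a - t) / b\<rceil>..\<lfloor>(of_int m * a - t + c) / b\<rfloor>}"
  proof
    fix k assume "k \<in> {k. in_window a b c t m k}"
    then have "0 \<le> t - of_int m * a + of_int k * b" "t - of_int m * a + of_int k * b < c"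
      by (auto simp: in_window_def)
    with assms show "k \<in> {\<lceil>(of_int m * a - t) / b\<rceil>..\<lfloor>(of_int m * a - t + c) / b\<rfloor>}"
      by (simp add: ceiling_le_iff le_floor_iff divide_le_eq le_divide_eq)
  qed
qed simp

lemma Mapply_indicator:
  assumes "0 < b"
  shows "Mapply a b c t (\<lambda>k. if k \<in> \<Lambda> then 1 else 0) m = card {k \<in> \<Lambda>. in_window a b c t m k}"
proof -
  have entry: "Mentry a b c t m k = (if in_window a b c t m k then 1 else 0)" for k
    by (simp add: Mentry_def chi0_def in_window_def)
  have "Mapply a b c t (\<lambda>k. if k \<in> \<Lambda> then 1 else 0) m
      = (\<Sum>k\<in>{k. in_window a b c t m k}. if k \<in> \<Lambda> then 1 else 0)"
    unfolding Mapply_def by (rule sum.cong) (simp_all add: entry)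
  also have "\<dots> = (\<Sum>k\<in>{k \<in> {k. in_window a b c t m k}. k \<in> \<Lambda>}. 1)"
    using finite_in_window[OF assms] by (rule sum.inter_filter[symmetric])
  also have "{k \<in> {k. in_window a b c t m k}. k \<in> \<Lambda>} = {k \<in> \<Lambda>. in_window a b c t m k}"
    by auto
  finally show ?thesis by simp
qed

lemma card_eq_1_iff_ex1: "card A = 1 \<longleftrightarrow> (\<exists>!x. x \<in> A)"
  by (auto simp: card_1_singleton_iff)

lemma Sabc_iff_exact_cover:
  assumes "0 < b"
  shows "t \<in> Sabc a b c \<longleftrightarrow> (\<exists>\<Lambda>. 0 \<in> \<Lambda> \<and> exact_cover a b c t \<Lambda>)"
proof -
  have Bb0_eq: "Bb0 = (\<lambda>\<Lambda> k. if k \<in> \<Lambda> then 1 else 0) ` {\<Lambda>. 0 \<in> \<Lambda>}"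
  proof (intro equalityI subsetI)
    fix x assume x: "x \<in> Bb0"
    then have "x = (\<lambda>k. if k \<in> {k. x k = 1} then 1 else 0)"
      by (force simp: Bb0_def)
    with x show "x \<in> (\<lambda>\<Lambda> k. if k \<in> \<Lambda> then 1 else 0) ` {\<Lambda>. 0 \<in> \<Lambda>}"
      by (intro image_eqI[of _ _ "{k. x k = 1}"]) (simp_all add: Bb0_def)
  qed (auto simp: Bb0_def)
  have row: "Mapply a b c t (\<lambda>k. if k \<in> \<Lambda> then 1 else 0) m = 1
      \<longleftrightarrow> (\<exists>!k. k \<in> \<Lambda> \<and> in_window a b c t m k)" for \<Lambda> m
    using card_eq_1_iff_ex1[of "{k \<in> \<Lambda>. in_window a b c t m k}"]
    by (simp add: Mapply_indicator[OF assms])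
  show ?thesis
    unfolding Sabc_def Bb0_eq exact_cover_def by (auto simp: row)
qed

lemma exact_cover_shift_row:
  "exact_cover a b c (t + of_int j * a) \<Lambda> \<longleftrightarrow> exact_cover a b c t \<Lambda>"
proof -
  have "in_window a b c (t + of_int j * a) m k \<longleftrightarrow> in_window a b c t (m - j) k" for m k
    by (simp add: in_window_def algebra_simps)
  then have "exact_cover a b c (t + of_int j * a) \<Lambda> \<longleftrightarrow>
      (\<forall>m. \<exists>!k. k \<in> \<Lambda> \<and> in_window a b c t (m - j) k)"
    by (simp add: exact_cover_def)
  also have "\<dots> \<longleftrightarrow> exact_cover a b c t \<Lambda>"
    unfolding exact_cover_def
  proof (intro iffI allI)
    fix m assume "\<forall>m. \<exists>!k. k \<in> \<Lambda> \<and> in_window a b c t (m - j) k"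
    from spec[OF this, of "m + j"] show "\<exists>!k. k \<in> \<Lambda> \<and> in_window a b c t m k" by simp
  qed simp
  finally show ?thesis .
qed

lemma ex1_shift_int: "(\<exists>!k::int. P (k + p)) \<longleftrightarrow> (\<exists>!k. P k)"
proof
  assume "\<exists>!k. P (k + p)"
  then obtain k where k: "P (k + p)" "\<And>i. P (i + p) \<Longrightarrow> i = k" by blast
  show "\<exists>!k. P k"
  proof (rule ex1I)
    show "P (k + p)" by (fact k(1))
  next
    fix y assume "P y"
    then have "P ((y - p) + p)" by simp
    from k(2)[OF this] show "y = k + p" by simp
  qed
next
  assume "\<exists>!k. P k"
  then obtain k where k: "P k" "\<And>i. P i \<Longrightarrow> i = k" by blast
  show "\<exists>!k. P (k + p)"
  proof (rule ex1I)
    show "P ((k - p) + p)" using k(1) by simp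
  next
    fix y assume "P (y + p)"
    from k(2)[OF this] show "y = k - p" by simp
  qed
qed

lemma exact_cover_shift_col:
  "exact_cover a b c (t + of_int p * b) {k. k + p \<in> \<Lambda>} \<longleftrightarrow> exact_cover a b c t \<Lambda>"
proof -
  have "in_window a b c (t + of_int p * b) m k \<longleftrightarrow> in_window a b c t m (k + p)" for m k
    by (simp add: in_window_def algebra_simps)
  then show ?thesis
    using ex1_shift_int[where P = "\<lambda>k. k \<in> \<Lambda> \<and> in_window a b c t _ k" and p = p]
    by (simp add: exact_cover_def)
qed

section \<open>Residues modulo \<open>a\<close>\<close>

definition rmod :: "real \<Rightarrow> real \<Rightarrow> real" where
  "rmod a t = t - of_int \<lfloor>t / a\<rfloor> * a"

lemma rmod_bounds:
  assumes "0 < a"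
  shows "0 \<le> rmod a t" "rmod a t < a"
proof -
  have "rmod a t = a * frac (t / a)"
    using assms by (simp add: rmod_def frac_def algebra_simps)
  then show "0 \<le> rmod a t" "rmod a t < a"
    using assms frac_lt_1[of "t / a"] by simp_all
qed

lemma rmod_eq:
  assumes "0 < a" "of_int j * a \<le> t" "t < of_int j * a + a"
  shows "rmod a t = t - of_int j * a"
proof -
  have "\<lfloor>t / a\<rfloor> = j"
    using assms by (simp add: floor_eq_iff le_divide_eq divide_less_eq algebra_simps)
  then show ?thesis by (simp add: rmod_def)
qed

lemma rmod_eq_self: "0 < a \<Longrightarrow> 0 \<le> t \<Longrightarrow> t < a \<Longrightarrow> rmod a t = t"
  using rmod_eq[of a 0 t] by simp

lemma rmod_add_multiple:
  assumes "0 < a"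
  shows "rmod a (t + of_int j * a) = rmod a t"
  using assms by (simp add: rmod_def add_divide_distrib algebra_simps)

lemma rmod_add:
  assumes "0 < a" "of_int j * a \<le> rmod a t + d" "rmod a t + d < of_int j * a + a"
  shows "rmod a (t + d) = rmod a t + d - of_int j * a"
proof -
  have "rmod a (t + d) = t + d - of_int (\<lfloor>t / a\<rfloor> + j) * a"
    using assms by (intro rmod_eq) (auto simp: rmod_def algebra_simps)
  then show ?thesis by (simp add: rmod_def algebra_simps)
qed

lemma in_per_iff_rmod:
  assumes "0 < a" "0 \<le> l" "u \<le> a"
  shows "in_per a l u t \<longleftrightarrow> l \<le> rmod a t \<and> rmod a t < u"
proof
  assume "in_per a l u t"
  then obtain k where k: "l \<le> t - of_int k * a" "t - of_int k * a < u"
    by (auto simp: in_per_def)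
  with assms have "rmod a t = t - of_int k * a" by (intro rmod_eq) auto
  with k show "l \<le> rmod a t \<and> rmod a t < u" by simp
qed (auto simp: in_per_def rmod_def)

section \<open>Gaps in an exact cover\<close>

lemma exact_cover_least_positive:
  assumes "0 < a" "0 < b" "a \<le> c" and cov: "exact_cover a b c t \<Lambda>" and "0 \<in> \<Lambda>"
  obtains k where "k \<in> \<Lambda>" "0 < k" "\<And>i. i \<in> \<Lambda> \<Longrightarrow> 0 < i \<Longrightarrow> k \<le> i"
    and "c \<le> rmod a t + of_int k * b" "rmod a t + of_int k * b < c + a"
proof -
  define j where "j = \<lfloor>t / a\<rfloor>"
  define r where "r = rmod a t"
  have r: "0 \<le> r" "r < a" using rmod_bounds[OF \<open>0 < a\<close>] by (auto simp: r_def)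
  have t: "t = of_int j * a + r" by (simp add: r_def j_def rmod_def)
  have row_j: "in_window a b c t j i \<longleftrightarrow> 0 \<le> r + of_int i * b \<and> r + of_int i * b < c" for i
    by (simp add: in_window_def t)
  have row_j1: "in_window a b c t (j + 1) i \<longleftrightarrow> 0 \<le> r - a + of_int i * b \<and> r - a + of_int i * b < c" for i
    by (simp add: in_window_def t algebra_simps)
  have far: "c \<le> r + of_int i * b" if "i \<in> \<Lambda>" "0 < i" for i
  proof (rule ccontr)
    assume "\<not> c \<le> r + of_int i * b"
    with that r \<open>0 < b\<close> have "in_window a b c t j i" by (simp add: row_j)
    moreover have "in_window a b c t j 0" using r assms by (simp add: row_j)
    ultimately have "i = 0"
      using cov that(1) \<open>0 \<in> \<Lambda>\<close> unfolding exact_cover_def by blast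
    with \<open>0 < i\<close> show False by simp
  qed
  obtain k where k: "k \<in> \<Lambda>" "in_window a b c t (j + 1) k"
    and k_unique: "\<And>i. i \<in> \<Lambda> \<Longrightarrow> in_window a b c t (j + 1) i \<Longrightarrow> i = k"
    using cov unfolding exact_cover_def by metis
  have "0 < of_int k * b" using k(2) r by (simp add: row_j1)
  with \<open>0 < b\<close> have "0 < k" by (simp add: zero_less_mult_iff)
  have least: "k \<le> i" if "i \<in> \<Lambda>" "0 < i" for i
  proof (rule ccontr)
    assume "\<not> k \<le> i"
    with \<open>0 < b\<close> have "of_int i * b < of_int k * b" by simp
    with far[OF that] k(2) \<open>a \<le> c\<close> have "in_window a b c t (j + 1) i" by (simp add: row_j1)
    with k_unique that \<open>\<not> k \<le> i\<close> show False by auto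
  qed
  show thesis
    using that[OF k(1) \<open>0 < k\<close> least] far[OF k(1) \<open>0 < k\<close>] k(2) by (simp add: row_j1 r_def)
qed

lemma exact_cover_greatest_negative:
  assumes "0 < a" "0 < b" and cov: "exact_cover a b c t \<Lambda>"
  obtains q where "q \<in> \<Lambda>" "q < 0" "\<And>i. i \<in> \<Lambda> \<Longrightarrow> i < 0 \<Longrightarrow> i \<le> q"
proof -
  define m where "m = \<lfloor>(t - c) / a\<rfloor>"
  have "of_int m * a \<le> t - c"
    using of_int_floor_le[of "(t - c) / a"] \<open>0 < a\<close> by (simp add: m_def le_divide_eq)
  moreover obtain k where "k \<in> \<Lambda>" "in_window a b c t m k"
    using cov unfolding exact_cover_def by metis
  ultimately have "k \<in> \<Lambda>" "of_int k * b < 0" by (auto simp: in_window_def)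
  with \<open>0 < b\<close> have k: "k \<in> \<Lambda>" "k < 0" by (simp_all add: mult_less_0_iff)
  define A where "A = {i \<in> \<Lambda>. k \<le> i \<and> i < 0}"
  have "finite A" by (rule finite_subset[of _ "{k..0}"]) (auto simp: A_def)
  have max_A: "Max A \<in> A" using \<open>finite A\<close> k by (intro Max_in) (auto simp: A_def)
  have le_max: "i \<le> Max A" if "i \<in> \<Lambda>" "i < 0" for i
  proof (cases "k \<le> i")
    case True
    with that have "i \<in> A" by (simp add: A_def)
    with \<open>finite A\<close> show ?thesis by simp
  next
    case False
    with max_A show ?thesis by (simp add: A_def)
  qed
  from max_A le_max show thesis by (intro that[of "Max A"]) (simp_all add: A_def)
qed

locale abc_setting =
  fixes a b c :: real
  assumes a_pos: "0 < a" and a_less_b: "a < b" and b_le_c: "b \<le> c"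
    and c0_gt: "b - a < c0 a b c" and c0_less: "c0 a b c < a"
begin

abbreviation "L \<equiv> \<lfloor>c / b\<rfloor>"
abbreviation "c\<^sub>0 \<equiv> c0 a b c"
abbreviation "c\<^sub>1 \<equiv> c1 a b c"
abbreviation "S \<equiv> Sabc a b c"

lemma b_pos: "0 < b"
  using a_pos a_less_b by simp

lemma L_pos: "1 \<le> L"
  using b_pos b_le_c by simp

lemma c_eq: "c = of_int L * b + c\<^sub>0"
  by (simp add: c0_def)

lemma L_times_b_eq: "of_int L * b = c\<^sub>1 + of_int \<lfloor>(c - c\<^sub>0) / a\<rfloor> * a"
  by (simp add: c1_def c0_def)

lemma S_iff: "t \<in> S \<longleftrightarrow> (\<exists>\<Lambda>. 0 \<in> \<Lambda> \<and> exact_cover a b c t \<Lambda>)"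
  by (rule Sabc_iff_exact_cover[OF b_pos])

lemma S_periodic: "t + of_int j * a \<in> S \<longleftrightarrow> t \<in> S"
  by (simp add: S_iff exact_cover_shift_row)

definition next_gap :: "real \<Rightarrow> int" where
  "next_gap t = (if rmod a t < c\<^sub>0 + a - b then L + 1 else L)"

lemma exact_cover_next_gap:
  assumes "exact_cover a b c t \<Lambda>" "0 \<in> \<Lambda>"
  shows "next_gap t \<in> \<Lambda>" "\<And>i. 0 < i \<Longrightarrow> i < next_gap t \<Longrightarrow> i \<notin> \<Lambda>"
    and "rmod a t < c\<^sub>0 + a - b \<or> c\<^sub>0 \<le> rmod a t"
proof -
  have "a \<le> c" using a_less_b b_le_c by simp
  obtain k where k: "k \<in> \<Lambda>" "\<And>i. i \<in> \<Lambda> \<Longrightarrow> 0 < i \<Longrightarrow> k \<le> i"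
    and lo: "c \<le> rmod a t + of_int k * b" and hi: "rmod a t + of_int k * b < c + a"
    using exact_cover_least_positive[OF a_pos b_pos \<open>a \<le> c\<close> assms] by metis
  define r where "r = rmod a t"
  have r: "0 \<le> r" "r < a" using rmod_bounds[OF a_pos] by (simp_all add: r_def)
  have split: "of_int k * b = of_int (k - L) * b + of_int L * b" by (simp add: algebra_simps)
  have lo': "c\<^sub>0 - r \<le> of_int (k - L) * b" and hi': "of_int (k - L) * b < c\<^sub>0 + a - r"
    using lo hi c_eq split by (simp_all add: r_def)
  \<comment> \<open>\<open>(k - L)b \<in> [c\<^sub>0 - r, c\<^sub>0 + a - r) \<subseteq> (-b, 2b)\<close>, so \<open>k - L \<in> {0, 1}\<close>, and \<open>r\<close> decides which\<close>
  have "- b < of_int (k - L) * b" using lo' r c0_gt a_less_b by linarith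
  then have "of_int (- 1) * b < of_int (k - L) * b" by simp
  then have "- 1 < k - L" using b_pos by (simp only: mult_less_cancel_right_pos of_int_less_iff)
  moreover have "of_int (k - L) * b < 2 * b" using hi' r c0_less a_less_b by linarith
  then have "of_int (k - L) * b < of_int 2 * b" by simp
  then have "k - L < 2" using b_pos by (simp only: mult_less_cancel_right_pos of_int_less_iff)
  ultimately consider "k = L" | "k = L + 1" by linarith
  then have "k = next_gap t \<and> (r < c\<^sub>0 + a - b \<or> c\<^sub>0 \<le> r)"
  proof cases
    case 1
    with lo' a_less_b show ?thesis by (simp add: next_gap_def r_def)
  next
    case 2
    with hi' show ?thesis by (simp add: next_gap_def r_def)
  qed
  then show "next_gap t \<in> \<Lambda>" and "rmod a t < c\<^sub>0 + a - b \<or> c\<^sub>0 \<le> rmod a t"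
    using k(1) by (simp_all add: r_def)
  show "i \<notin> \<Lambda>" if "0 < i" "i < next_gap t" for i
    using k(2)[of i] that \<open>k = next_gap t \<and> _\<close> by fastforce
qed

definition next_pt :: "real \<Rightarrow> real" where
  "next_pt t = t + of_int (next_gap t) * b"

lemma exact_cover_next_pt:
  assumes "exact_cover a b c t \<Lambda>" "0 \<in> \<Lambda>"
  shows "exact_cover a b c (next_pt t) {k. k + next_gap t \<in> \<Lambda>}" "0 \<in> {k. k + next_gap t \<in> \<Lambda>}"
  using assms exact_cover_next_gap(1)[OF assms] by (simp_all add: next_pt_def exact_cover_shift_col)

lemma S_rmod_cases: "t \<in> S \<Longrightarrow> rmod a t < c\<^sub>0 + a - b \<or> c\<^sub>0 \<le> rmod a t"
  using exact_cover_next_gap(3) by (auto simp: S_iff)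

lemma S_next_cases:
  assumes "t \<in> S"
  shows "c\<^sub>0 \<le> rmod a t \<and> t + of_int L * b \<in> S \<or> rmod a t < c\<^sub>0 + a - b \<and> t + of_int (L + 1) * b \<in> S"
proof -
  have "next_pt t \<in> S"
    using assms exact_cover_next_pt by (meson S_iff)
  moreover have "c\<^sub>0 + a - b < c\<^sub>0" using a_less_b by simp
  ultimately show ?thesis
    using S_rmod_cases[OF assms] by (auto simp: next_pt_def next_gap_def)
qed

definition prev_gap :: "real \<Rightarrow> int" where
  "prev_gap t = (if c\<^sub>0 \<le> rmod a (t - of_int L * b) then L else L + 1)"

lemma exact_cover_prev_gap:
  assumes cov: "exact_cover a b c t \<Lambda>" and "0 \<in> \<Lambda>"
  shows "- prev_gap t \<in> \<Lambda>" "\<And>i. - prev_gap t < i \<Longrightarrow> i < 0 \<Longrightarrow> i \<notin> \<Lambda>"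
    and "next_gap (t - of_int (prev_gap t) * b) = prev_gap t"
proof -
  obtain q where q: "q \<in> \<Lambda>" "q < 0" and q_max: "\<And>i. i \<in> \<Lambda> \<Longrightarrow> i < 0 \<Longrightarrow> i \<le> q"
    using exact_cover_greatest_negative[OF a_pos b_pos cov] by metis
  define s where "s = t + of_int q * b"
  define \<Lambda>' where "\<Lambda>' = {k. k + q \<in> \<Lambda>}"
  have cov': "exact_cover a b c s \<Lambda>'" "0 \<in> \<Lambda>'"
    using cov q by (simp_all add: s_def \<Lambda>'_def exact_cover_shift_col)
  have "- q \<in> \<Lambda>'" using \<open>0 \<in> \<Lambda>\<close> by (simp add: \<Lambda>'_def)
  have gap_s: "next_gap s = - q"
  proof (rule antisym)
    show "next_gap s \<le> - q"
      using exact_cover_next_gap(2)[OF cov', of "- q"] \<open>- q \<in> \<Lambda>'\<close> q(2) by force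
    have "next_gap s + q \<in> \<Lambda>" using exact_cover_next_gap(1)[OF cov'] by (simp add: \<Lambda>'_def)
    moreover have "0 < next_gap s" using L_pos by (simp add: next_gap_def)
    ultimately show "- q \<le> next_gap s" using q_max by force
  qed
  have "prev_gap t = - q"
  proof (cases "rmod a s < c\<^sub>0 + a - b")
    case True
    with gap_s have q_eq: "real_of_int q = - of_int L - 1" by (simp add: next_gap_def)
    have "t - of_int L * b = s + b" unfolding s_def q_eq by (simp add: algebra_simps)
    moreover have "rmod a (s + b) = rmod a s + b - a"
      using True rmod_bounds[OF a_pos, of s] a_less_b c0_less
      by (intro rmod_add[where j = 1, simplified, OF a_pos]) simp_all
    ultimately show ?thesis using True gap_s by (simp add: prev_gap_def next_gap_def)
  next
    case False
    with gap_s have "t - of_int L * b = s" by (simp add: s_def next_gap_def)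
    moreover have "c\<^sub>0 \<le> rmod a s" using False exact_cover_next_gap(3)[OF cov'] by simp
    ultimately show ?thesis using False gap_s by (simp add: prev_gap_def next_gap_def)
  qed
  with q gap_s show "- prev_gap t \<in> \<Lambda>" "next_gap (t - of_int (prev_gap t) * b) = prev_gap t"
    by (simp_all add: s_def)
  show "i \<notin> \<Lambda>" if "- prev_gap t < i" "i < 0" for i
    using q_max[of i] that \<open>prev_gap t = - q\<close> by fastforce
qed

definition prev_pt :: "real \<Rightarrow> real" where
  "prev_pt t = t - of_int (prev_gap t) * b"

lemma exact_cover_prev_pt:
  assumes "exact_cover a b c t \<Lambda>" "0 \<in> \<Lambda>"
  shows "exact_cover a b c (prev_pt t) {k. k - prev_gap t \<in> \<Lambda>}" "0 \<in> {k. k - prev_gap t \<in> \<Lambda>}"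
  using assms exact_cover_prev_gap(1)[OF assms] exact_cover_shift_col[of a b c t "- prev_gap t" \<Lambda>]
  by (simp_all add: prev_pt_def)

lemma S_prev_cases:
  assumes "s \<in> S"
  shows "c\<^sub>0 \<le> rmod a (s - of_int L * b) \<and> s - of_int L * b \<in> S
    \<or> rmod a (s - of_int (L + 1) * b) < c\<^sub>0 + a - b \<and> s - of_int (L + 1) * b \<in> S"
proof -
  obtain \<Lambda> where cov: "exact_cover a b c s \<Lambda>" "0 \<in> \<Lambda>" using assms by (auto simp: S_iff)
  have prev: "s - of_int (prev_gap s) * b \<in> S"
    unfolding S_iff using exact_cover_prev_pt[OF cov]
    by (intro exI[of _ "{k. k - prev_gap s \<in> \<Lambda>}"]) (simp add: prev_pt_def)
  have gap: "next_gap (s - of_int (prev_gap s) * b) = prev_gap s"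
    by (rule exact_cover_prev_gap(3)[OF cov])
  consider "prev_gap s = L" "c\<^sub>0 \<le> rmod a (s - of_int L * b)" | "prev_gap s = L + 1"
    unfolding prev_gap_def by (cases "c\<^sub>0 \<le> rmod a (s - of_int L * b)") simp_all
  then show ?thesis
  proof cases
    case 1
    with prev show ?thesis by simp
  next
    case 2
    with gap have "rmod a (s - of_int (L + 1) * b) < c\<^sub>0 + a - b"
      by (simp add: next_gap_def split: if_splits)
    with 2 prev show ?thesis by simp
  qed
qed

section \<open>Borel measurability of \<open>S\<close>\<close>

text \<open>The exact cover of \<open>t \<in> S\<close> is unique: it is the orbit of \<open>t\<close> under \<open>next_pt\<close> and \<open>prev_pt\<close>.\<close>

lemma next_pt_iterate:
  assumes "exact_cover a b c t \<Lambda>" "0 \<in> \<Lambda>"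
  shows "\<exists>k\<in>\<Lambda>. (next_pt ^^ n) t = t + of_int k * b"
  using assms
proof (induction n arbitrary: t \<Lambda>)
  case 0
  then show ?case by (intro bexI[of _ 0]) simp_all
next
  case (Suc n)
  obtain k where k: "k + next_gap t \<in> \<Lambda>" "(next_pt ^^ n) (next_pt t) = next_pt t + of_int k * b"
    using Suc.IH[OF exact_cover_next_pt[OF Suc.prems]] by blast
  have "(next_pt ^^ Suc n) t = (next_pt ^^ n) (next_pt t)" by (simp only: funpow_Suc_right o_apply)
  also have "\<dots> = t + of_int (k + next_gap t) * b" by (simp only: k(2)) (simp add: next_pt_def algebra_simps)
  finally show ?case using k(1) by blast
qed

lemma prev_pt_iterate:
  assumes "exact_cover a b c t \<Lambda>" "0 \<in> \<Lambda>"
  shows "\<exists>k\<in>\<Lambda>. (prev_pt ^^ n) t = t + of_int k * b"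
  using assms
proof (induction n arbitrary: t \<Lambda>)
  case 0
  then show ?case by (intro bexI[of _ 0]) simp_all
next
  case (Suc n)
  obtain k where k: "k - prev_gap t \<in> \<Lambda>" "(prev_pt ^^ n) (prev_pt t) = prev_pt t + of_int k * b"
    using Suc.IH[OF exact_cover_prev_pt[OF Suc.prems]] by blast
  have "(prev_pt ^^ Suc n) t = (prev_pt ^^ n) (prev_pt t)" by (simp only: funpow_Suc_right o_apply)
  also have "\<dots> = t + of_int (k - prev_gap t) * b" by (simp only: k(2)) (simp add: prev_pt_def algebra_simps)
  finally show ?case using k(1) by blast
qed

lemma nonneg_in_next_orbit:
  assumes "exact_cover a b c t \<Lambda>" "0 \<in> \<Lambda>" "k \<in> \<Lambda>" "0 \<le> k"
  shows "\<exists>n. (next_pt ^^ n) t = t + of_int k * b"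
  using assms
proof (induction "nat k" arbitrary: k t \<Lambda> rule: less_induct)
  case less
  show ?case
  proof (cases "k = 0")
    case True
    then show ?thesis by (intro exI[of _ 0]) simp
  next
    case False
    define g where "g = next_gap t"
    have "g \<le> k" using exact_cover_next_gap(2)[OF less.prems(1,2), of k] less.prems(3,4) False
      by (force simp: g_def)
    moreover have "0 < g" using L_pos by (simp add: g_def next_gap_def)
    ultimately obtain n where n: "(next_pt ^^ n) (next_pt t) = next_pt t + of_int (k - g) * b"
      using less.hyps[of "k - g", OF _ exact_cover_next_pt[OF less.prems(1,2)]] less.prems(3,4)
      by (force simp: g_def)
    have "(next_pt ^^ Suc n) t = (next_pt ^^ n) (next_pt t)" by (simp only: funpow_Suc_right o_apply)
    also have "\<dots> = t + of_int k * b" by (simp only: n) (simp add: next_pt_def g_def algebra_simps)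
    finally show ?thesis by blast
  qed
qed

lemma nonpos_in_prev_orbit:
  assumes "exact_cover a b c t \<Lambda>" "0 \<in> \<Lambda>" "k \<in> \<Lambda>" "k \<le> 0"
  shows "\<exists>n. (prev_pt ^^ n) t = t + of_int k * b"
  using assms
proof (induction "nat (- k)" arbitrary: k t \<Lambda> rule: less_induct)
  case less
  show ?case
  proof (cases "k = 0")
    case True
    then show ?thesis by (intro exI[of _ 0]) simp
  next
    case False
    define g where "g = prev_gap t"
    have "k \<le> - g" using exact_cover_prev_gap(2)[OF less.prems(1,2), of k] less.prems(3,4) False
      by (force simp: g_def)
    moreover have "0 < g" using L_pos by (simp add: g_def prev_gap_def)
    ultimately obtain n where n: "(prev_pt ^^ n) (prev_pt t) = prev_pt t + of_int (k + g) * b"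
      using less.hyps[of "k + g", OF _ exact_cover_prev_pt[OF less.prems(1,2)]] less.prems(3,4)
      by (force simp: g_def)
    have "(prev_pt ^^ Suc n) t = (prev_pt ^^ n) (prev_pt t)" by (simp only: funpow_Suc_right o_apply)
    also have "\<dots> = t + of_int k * b" by (simp only: n) (simp add: prev_pt_def g_def algebra_simps)
    finally show ?thesis by blast
  qed
qed

definition orbit :: "real \<Rightarrow> int set" where
  "orbit t = {k. \<exists>n. (next_pt ^^ n) t = t + of_int k * b \<or> (prev_pt ^^ n) t = t + of_int k * b}"

lemma exact_cover_eq_orbit:
  assumes "exact_cover a b c t \<Lambda>" "0 \<in> \<Lambda>"
  shows "\<Lambda> = orbit t"
proof (intro equalityI subsetI)
  fix k assume "k \<in> \<Lambda>"
  show "k \<in> orbit t"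
  proof (cases "0 \<le> k")
    case True
    with nonneg_in_next_orbit[OF assms \<open>k \<in> \<Lambda>\<close>] show ?thesis by (auto simp: orbit_def)
  next
    case False
    with nonpos_in_prev_orbit[OF assms \<open>k \<in> \<Lambda>\<close>] show ?thesis by (auto simp: orbit_def)
  qed
next
  fix k assume "k \<in> orbit t"
  then obtain n where "(next_pt ^^ n) t = t + of_int k * b \<or> (prev_pt ^^ n) t = t + of_int k * b"
    by (auto simp: orbit_def)
  with next_pt_iterate[OF assms, of n] prev_pt_iterate[OF assms, of n] b_pos
  show "k \<in> \<Lambda>" by auto
qed

lemma S_eq_orbit_cover: "S = {t. exact_cover a b c t (orbit t)}"
proof (intro equalityI subsetI CollectI)
  fix t assume "t \<in> S"
  then obtain \<Lambda> where "0 \<in> \<Lambda>" "exact_cover a b c t \<Lambda>" by (auto simp: S_iff)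
  with exact_cover_eq_orbit show "exact_cover a b c t (orbit t)" by metis
next
  fix t assume "t \<in> {t. exact_cover a b c t (orbit t)}"
  moreover have "0 \<in> orbit t" by (auto simp: orbit_def intro: exI[of _ 0])
  ultimately show "t \<in> S" unfolding S_iff by blast
qed

lemma next_pt_measurable [measurable]: "next_pt \<in> borel_measurable borel"
  unfolding next_pt_def[abs_def] next_gap_def rmod_def by measurable

lemma prev_pt_measurable [measurable]: "prev_pt \<in> borel_measurable borel"
  unfolding prev_pt_def[abs_def] prev_gap_def rmod_def by measurable

lemma S_borel: "S \<in> sets borel"
proof -
  have "S = {t \<in> space borel. \<forall>m. \<exists>k. ((\<exists>n. (next_pt ^^ n) t = t + of_int k * b \<or>
      (prev_pt ^^ n) t = t + of_int k * b) \<and> in_window a b c t m k) \<and>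
      (\<forall>k'. (\<exists>n. (next_pt ^^ n) t = t + of_int k' * b \<or> (prev_pt ^^ n) t = t + of_int k' * b) \<and>
        in_window a b c t m k' \<longrightarrow> k' = k)}"
    unfolding S_eq_orbit_cover exact_cover_def orbit_def Ex1_def by simp
  also have "\<dots> \<in> sets borel"
    unfolding in_window_def atLeastLessThan_iff by measurable
  finally show ?thesis .
qed

section \<open>Mass of \<open>S\<close> on intervals\<close>

definition S_mass :: "real \<Rightarrow> real \<Rightarrow> real" where
  "S_mass x y = measure lebesgue (S \<inter> {x..<y})"

lemma S_Int_interval_lmeasurable: "S \<inter> {x..<y} \<in> lmeasurable"
  using S_borel by (intro bounded_set_imp_lmeasurable) auto

lemma S_mass_add:
  assumes "x \<le> y" "y \<le> z"
  shows "S_mass x z = S_mass x y + S_mass y z"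
proof -
  have union: "S \<inter> {x..<z} = (S \<inter> {x..<y}) \<union> (S \<inter> {y..<z})" using assms by auto
  have disjoint: "(S \<inter> {x..<y}) \<inter> (S \<inter> {y..<z}) = {}" by auto
  show ?thesis
    unfolding S_mass_def union
    using measure_Un3[OF S_Int_interval_lmeasurable S_Int_interval_lmeasurable, of x y y z] disjoint
    by simp
qed

lemma Yabc_eq_S_mass: "Yabc a b c t = (if 0 \<le> t then S_mass 0 t else - S_mass t 0)"
  by (cases t "0::real" rule: linorder_cases) (simp_all add: Yabc_def S_mass_def Int_commute)

lemma Yabc_diff:
  assumes "x \<le> y"
  shows "Yabc a b c y - Yabc a b c x = S_mass x y"
  using assms S_mass_add[of x 0 y] S_mass_add[of 0 x y] S_mass_add[of x y 0]
  by (auto simp: Yabc_eq_S_mass)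

lemma S_mass_translate:
  assumes "\<And>s. s \<in> S \<Longrightarrow> x \<le> s \<Longrightarrow> s < y \<Longrightarrow> s + d \<in> S"
    and "\<And>s. s \<in> S \<Longrightarrow> x + d \<le> s \<Longrightarrow> s < y + d \<Longrightarrow> s - d \<in> S"
  shows "S_mass (x + d) (y + d) = S_mass x y"
proof -
  have "S \<inter> {x + d..<y + d} = (+) d ` (S \<inter> {x..<y})"
  proof (intro equalityI subsetI)
    fix s assume "s \<in> S \<inter> {x + d..<y + d}"
    with assms(2) have "s - d \<in> S \<inter> {x..<y}" by auto
    then show "s \<in> (+) d ` (S \<inter> {x..<y})" by (intro image_eqI[of _ _ "s - d"]) auto
  qed (use assms(1) in \<open>auto simp: add.commute\<close>)
  then show ?thesis unfolding S_mass_def by (simp add: measure_translation)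
qed

lemma S_mass_periodic: "S_mass (x + of_int j * a) (y + of_int j * a) = S_mass x y"
proof (rule S_mass_translate)
  fix s assume "s \<in> S"
  then show "s + of_int j * a \<in> S" by (simp add: S_periodic)
  from \<open>s \<in> S\<close> show "s - of_int j * a \<in> S"
    using S_periodic[of "s - of_int j * a" j] by simp
qed

lemma S_mass_period: "S_mass x (x + a) = S_mass 0 a"
proof -
  define j where "j = \<lfloor>x / a\<rfloor>"
  define r where "r = rmod a x"
  have x: "x = of_int j * a + r" by (simp add: j_def r_def rmod_def)
  have r: "0 \<le> r" "r < a" using rmod_bounds[OF a_pos] by (simp_all add: r_def)
  have "S_mass x (x + a) = S_mass x (of_int (j + 1) * a) + S_mass (of_int (j + 1) * a) (x + a)"
    using r by (intro S_mass_add) (simp_all add: x algebra_simps)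
  also have "S_mass x (of_int (j + 1) * a) = S_mass r a"
    using S_mass_periodic[of r j a] by (simp add: x algebra_simps)
  also have "S_mass (of_int (j + 1) * a) (x + a) = S_mass 0 r"
    using S_mass_periodic[of 0 "j + 1" r] by (simp add: x algebra_simps)
  also have "S_mass r a + S_mass 0 r = S_mass 0 a"
    using S_mass_add[of 0 r a] r by simp
  finally show ?thesis .
qed

lemma Yabc_periodic: "Yabc a b c (x + of_int j * a) = Yabc a b c x + of_int j * Yabc a b c a"
proof -
  have step: "Yabc a b c (y + a) = Yabc a b c y + Yabc a b c a" for y
    using Yabc_diff[of y "y + a"] S_mass_period[of y] Yabc_eq_S_mass[of a] a_pos by simp
  show ?thesis
  proof (induction j rule: int_induct[where k = 0])
    case (step1 i)
    then show ?case using step[of "x + of_int i * a"] by (simp add: algebra_simps)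
  next
    case (step2 i)
    then show ?case using step[of "x + of_int (i - 1) * a"] by (simp add: algebra_simps)
  qed simp
qed

lemma S_mass_slide:
  assumes "x \<le> y" "0 \<le> d" "S_mass (x + d) (y + d) = S_mass x y"
  shows "S_mass x (x + d) = S_mass y (y + d)"
  using S_mass_add[of x "x + d" "y + d"] S_mass_add[of x y "y + d"] assms by simp

lemma S_mass_translate_L:
  assumes "of_int j * a + c\<^sub>0 \<le> x" "x \<le> y" "y \<le> of_int j * a + a"
  shows "S_mass (x + of_int L * b) (y + of_int L * b) = S_mass x y"
proof (rule S_mass_translate)
  fix s assume "s \<in> S" "x \<le> s" "s < y"
  moreover have "rmod a s = s - of_int j * a"
    using assms \<open>x \<le> s\<close> \<open>s < y\<close> c0_gt a_less_b by (intro rmod_eq[OF a_pos]) simp_all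
  ultimately show "s + of_int L * b \<in> S"
    using S_next_cases assms a_less_b by force
next
  fix s assume s: "s \<in> S" "x + of_int L * b \<le> s" "s < y + of_int L * b"
  define p where "p = s - of_int (L + 1) * b"
  have "rmod a p = p - of_int (j - 1) * a"
    using assms s c0_gt a_less_b by (intro rmod_eq[OF a_pos]) (simp_all add: p_def algebra_simps)
  then have "c\<^sub>0 + a - b \<le> rmod a p"
    using assms s by (simp add: p_def algebra_simps)
  with S_prev_cases[OF s(1)] show "s - of_int L * b \<in> S" by (auto simp: p_def)
qed

lemma S_mass_translate_L1:
  assumes "of_int j * a \<le> x" "x \<le> y" "y \<le> of_int j * a + c\<^sub>0 + a - b"
  shows "S_mass (x + of_int (L + 1) * b) (y + of_int (L + 1) * b) = S_mass x y"
proof (rule S_mass_translate)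
  fix s assume "s \<in> S" "x \<le> s" "s < y"
  moreover have "rmod a s = s - of_int j * a"
    using assms \<open>x \<le> s\<close> \<open>s < y\<close> c0_less a_less_b by (intro rmod_eq[OF a_pos]) simp_all
  ultimately show "s + of_int (L + 1) * b \<in> S"
    using S_next_cases assms a_less_b by force
next
  fix s assume s: "s \<in> S" "x + of_int (L + 1) * b \<le> s" "s < y + of_int (L + 1) * b"
  define p where "p = s - of_int L * b"
  have "rmod a p = p - of_int (j + 1) * a"
    using assms s c0_less a_less_b by (intro rmod_eq[OF a_pos]) (simp_all add: p_def algebra_simps)
  then have "rmod a p < c\<^sub>0"
    using assms s by (simp add: p_def algebra_simps)
  with S_prev_cases[OF s(1)] show "s - of_int (L + 1) * b \<in> S" by (auto simp: p_def)
qed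

lemma S_hole: "S \<inter> {c\<^sub>1..<c\<^sub>1 + b - a} = {}"
proof (intro equals0I)
  fix s assume "s \<in> S \<inter> {c\<^sub>1..<c\<^sub>1 + b - a}"
  then have s: "s \<in> S" "c\<^sub>1 \<le> s" "s < c\<^sub>1 + b - a" by auto
  define N where "N = \<lfloor>(c - c\<^sub>0) / a\<rfloor>"
  have Lb: "of_int L * b = c\<^sub>1 + of_int N * a" by (simp add: N_def L_times_b_eq)
  have "s - of_int L * b = (s - c\<^sub>1) + of_int (- N) * a" using Lb by simp
  moreover have "rmod a (s - c\<^sub>1) = s - c\<^sub>1"
    using s c0_gt c0_less by (intro rmod_eq_self[OF a_pos]) simp_all
  ultimately have rmod_L: "rmod a (s - of_int L * b) = s - c\<^sub>1"
    by (metis rmod_add_multiple[OF a_pos])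
  have "of_int (L + 1) * b = of_int L * b + b" "of_int (- N - 2) * a = - (of_int N * a) - 2 * a"
    by (simp_all add: algebra_simps)
  then have "s - of_int (L + 1) * b = (s - c\<^sub>1 - b + 2 * a) + of_int (- N - 2) * a"
    using Lb by linarith
  moreover have "rmod a (s - c\<^sub>1 - b + 2 * a) = s - c\<^sub>1 - b + 2 * a"
    using s a_less_b c0_gt c0_less by (intro rmod_eq_self[OF a_pos]) simp_all
  ultimately have "rmod a (s - of_int (L + 1) * b) = s - c\<^sub>1 - b + 2 * a"
    by (metis rmod_add_multiple[OF a_pos])
  with rmod_L S_prev_cases[OF s(1)] s c0_gt c0_less show False by auto
qed

section \<open>The increment of \<open>Y\<close> along \<open>R\<close>\<close>

lemma Rabc_low:
  assumes "rmod a t < c\<^sub>0 + a - b"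
  shows "Rabc a b c t = t + of_int (L + 1) * b"
  using assms in_per_iff_rmod[OF a_pos, of 0 "c\<^sub>0 + a - b" t] rmod_bounds[OF a_pos, of t] c0_less c0_gt a_less_b
  by (simp add: Rabc_def algebra_simps)

lemma Rabc_high:
  assumes "c\<^sub>0 \<le> rmod a t"
  shows "Rabc a b c t = t + of_int L * b"
  using assms in_per_iff_rmod[OF a_pos, of 0 "c\<^sub>0 + a - b" t]
    in_per_iff_rmod[OF a_pos, of "c\<^sub>0 + a - b" c\<^sub>0 t] in_per_iff_rmod[OF a_pos, of c\<^sub>0 a t]
    rmod_bounds[OF a_pos, of t] c0_less c0_gt a_less_b
  by (simp add: Rabc_def)

lemma Yabc_increment:
  assumes "0 \<le> d" "S_mass t (t + d) = S_mass (of_int i * a) (of_int i * a + d)"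
  shows "Yabc a b c (t + d) - Yabc a b c t = Yabc a b c d"
  using assms Yabc_diff[of t "t + d"] S_mass_periodic[of 0 i d] Yabc_eq_S_mass[of d]
  by (simp add: add.commute)

lemma Yabc_Rabc:
  assumes "t \<in> S"
  shows "\<exists>n::int. Yabc a b c (Rabc a b c t) - Yabc a b c t - Yabc a b c (c\<^sub>1 + b - a)
    = of_int n * Yabc a b c a"
proof -
  define N where "N = \<lfloor>(c - c\<^sub>0) / a\<rfloor>"
  define j where "j = \<lfloor>t / a\<rfloor>"
  have t: "t = of_int j * a + rmod a t" by (simp add: j_def rmod_def)
  have r: "0 \<le> rmod a t" "rmod a t < a" by (rule rmod_bounds[OF a_pos])+
  have Lb: "of_int L * b = c\<^sub>1 + of_int N * a" by (simp add: N_def L_times_b_eq)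
  have Lb_pos: "0 \<le> of_int L * b" using L_pos b_pos by simp
  have "Yabc a b c (c\<^sub>1 + b - a) - Yabc a b c c\<^sub>1 = 0"
    using Yabc_diff[of c\<^sub>1 "c\<^sub>1 + b - a"] S_hole a_less_b by (simp add: S_mass_def)
  then have hole: "Yabc a b c (c\<^sub>1 + b - a) = Yabc a b c c\<^sub>1" by simp
  consider "rmod a t < c\<^sub>0 + a - b" | "c\<^sub>0 \<le> rmod a t" using S_rmod_cases[OF assms] by blast
  then show ?thesis
  proof cases
    case 1
    define d where "d = of_int (L + 1) * b"
    have d_pos: "0 \<le> d" using Lb_pos b_pos by (simp add: d_def algebra_simps)
    have "of_int j * a \<le> t" "t \<le> of_int j * a + c\<^sub>0 + a - b" using t r 1 by linarith+
    then have "S_mass (of_int j * a + d) (t + d) = S_mass (of_int j * a) t"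
      unfolding d_def by (intro S_mass_translate_L1[of j]) simp_all
    with \<open>of_int j * a \<le> t\<close> d_pos have "S_mass t (t + d) = S_mass (of_int j * a) (of_int j * a + d)"
      by (intro S_mass_slide[symmetric])
    with d_pos have "Yabc a b c (t + d) - Yabc a b c t = Yabc a b c d" by (rule Yabc_increment)
    moreover have "d = (c\<^sub>1 + b - a) + of_int (N + 1) * a" using Lb by (simp add: d_def algebra_simps)
    then have "Yabc a b c d = Yabc a b c (c\<^sub>1 + b - a) + of_int (N + 1) * Yabc a b c a"
      by (simp only: Yabc_periodic)
    moreover have "Rabc a b c t = t + d" using 1 by (simp add: d_def Rabc_low)
    ultimately show ?thesis by (intro exI[of _ "N + 1"]) simp
  next
    case 2
    define d where "d = of_int L * b"
    define e where "e = of_int (j + 1) * a"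
    have e_eq: "e = of_int j * a + a" by (simp add: e_def algebra_simps)
    have "of_int j * a + c\<^sub>0 \<le> t" "t \<le> e" using t r 2 e_eq by linarith+
    then have "S_mass (t + d) (e + d) = S_mass t e"
      unfolding d_def e_eq by (intro S_mass_translate_L[of j]) simp_all
    with \<open>t \<le> e\<close> Lb_pos have "S_mass t (t + d) = S_mass e (e + d)"
      unfolding d_def by (intro S_mass_slide)
    with Lb_pos have "Yabc a b c (t + d) - Yabc a b c t = Yabc a b c d"
      unfolding d_def e_def by (rule Yabc_increment)
    moreover have "d = c\<^sub>1 + of_int N * a" by (simp add: d_def Lb)
    then have "Yabc a b c d = Yabc a b c c\<^sub>1 + of_int N * Yabc a b c a"
      by (simp only: Yabc_periodic)
    moreover have "Rabc a b c t = t + d" using 2 by (simp add: d_def Rabc_high)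
    ultimately show ?thesis using hole by (intro exI[of _ N]) simp
  qed
qed

end

theorem theorem5p5:
  fixes a b c :: real
  assumes "0 < a" "a < b" "b < c"
    and "\<lfloor>c / b\<rfloor> \<ge> 2"
    and "b - a < c0 a b c" "c0 a b c < a"
    and "0 \<le> c1 a b c" "c1 a b c \<le> 2 * a - b"
    and "Sabc a b c \<noteq> {}"
    and "a / b \<notin> \<rat> \<or>
         (\<exists>p q :: int. 0 < p \<and> 0 < q \<and> coprime p q \<and> a / b = of_int p / of_int q \<and>
            (\<exists>k::int. c = of_int k * (b / of_int q)))"
  shows "\<forall>t\<in>Sabc a b c. \<exists>n::int.
           Yabc a b c (Rabc a b c t) - Yabc a b c t - Yabc a b c (c1 a b c + b - a)
             = of_int n * Yabc a b c a"
proof -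
  interpret abc_setting a b c
    using assms(1-3,5,6) by unfold_locales simp_all
  show ?thesis using Yabc_Rabc by blast
qed

end
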